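(* Assume (A1), (A2) and (B3) (see context). For fixed $x$, consider $Q$ as an operator acting on functions of $v$. Then: 1. $Q:L^1_\nu(\mathbb{R}^d)\to L^1(\mathbb{R}^d)$ is bounded and conservative: $\int_{\mathbb{R}^d}Q(f)\,\mathrm{d}v=0$ for all $f\in L^1_\nu(\mathbb{R}^d)$. 2. The operator $\frac1\nu Q$ is bounded on $L^2_{\nu F^{-1}}(\mathbb{R}^d)$, $Q$ is dissipative, and for all $f\in L^2_{\nu F^{-1}}(\mathbb{R}^d)$, $$\int_{\mathbb{R}^d}Q(f)f\,\frac{\mathrm{d}v}{F}\le-\frac{1}{2M}\int_{\mathbb{R}^d}|f-\rho F|^2\,\frac{\nu\,\mathrm{d}v}{F},\qquad \rho:=\int_{\mathbb{R}^d}f\,\mathrm{d}v,$$ where $M$ is the constant of (B3).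
   Context: Let $d\ge1$, $\sigma(x,v,v')\ge0$. The collision operator is $Q(f)(x,v):=\int_{\mathbb{R}^d}[\sigma(x,v,v')f(v')-\sigma(x,v',v)f(v)]\,\mathrm{d}v'$, $\nu(x,v):=\int_{\mathbb{R}^d}\sigma(x,v',v)\,\mathrm{d}v'$, $Q^+(f):=\int\sigma(x,v,v')f(v')\,\mathrm{d}v'$. For a weight $\omega$, $L^p_\omega$ is $L^p$ with respect to $\omega\,\mathrm{d}v$. Assumptions: (A1) $\sigma\ge0$ is locally integrable on $\mathbb{R}^{2d}$ in $(v,v')$ for every $x$, and $\nu(x,v)>0$ for all $x,v$. (A2) There is $F\in L^1_\nu(\mathbb{R}^d)$, independent of $x$, with $Q(F)=0$ (so $Q^+(F)=\nu F$), $F>0$ and $\int F\,\mathrm{d}v=1$. (B3) With $\mathrm{b}(x,v,v'):=\sigma(x,v,v')F(v)^{-1}$, $F'=F(v')$, $\nu'=\nu(x,v')$, there is $M>0$ such that for all $x,v$: $\int F'\frac{\nu(x,v)}{\mathrm{b}}\,\mathrm{d}v'+\big(\int\frac{F'}{\nu'}\frac{\mathrm{b}^2}{\nu(x,v)^2}\,\mathrm{d}v'\big)^{1/2}\le M$. *)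

theory Defs
  imports "HOL-Analysis.Analysis"
begin

text \<open>Velocity space R^d is modelled by an arbitrary Euclidean space 'v with Lebesgue measure lborel.
  The cross section is sigma x v v'.\<close>

definition nu :: "('x \<Rightarrow> 'v::euclidean_space \<Rightarrow> 'v \<Rightarrow> real) \<Rightarrow> 'x \<Rightarrow> 'v \<Rightarrow> real" where
  "nu \<sigma> x v = (\<integral>v'. \<sigma> x v' v \<partial>lborel)"

definition Qop :: "('x \<Rightarrow> 'v::euclidean_space \<Rightarrow> 'v \<Rightarrow> real) \<Rightarrow> 'x \<Rightarrow> ('v \<Rightarrow> real) \<Rightarrow> 'v \<Rightarrow> real" where
  "Qop \<sigma> x f v = (\<integral>v'. (\<sigma> x v v' * f v' - \<sigma> x v' v * f v) \<partial>lborel)"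

definition L1w :: "('v::euclidean_space \<Rightarrow> real) \<Rightarrow> ('v \<Rightarrow> real) \<Rightarrow> bool" where
  "L1w w f \<longleftrightarrow> f \<in> borel_measurable lborel \<and> integrable lborel (\<lambda>v. w v * \<bar>f v\<bar>)"

definition L1norm :: "('v::euclidean_space \<Rightarrow> real) \<Rightarrow> ('v \<Rightarrow> real) \<Rightarrow> real" where
  "L1norm w f = (\<integral>v. w v * \<bar>f v\<bar> \<partial>lborel)"

definition L2w :: "('v::euclidean_space \<Rightarrow> real) \<Rightarrow> ('v \<Rightarrow> real) \<Rightarrow> bool" where
  "L2w w f \<longleftrightarrow> f \<in> borel_measurable lborel \<and> integrable lborel (\<lambda>v. w v * (f v)\<^sup>2)"

definition L2norm :: "('v::euclidean_space \<Rightarrow> real) \<Rightarrow> ('v \<Rightarrow> real) \<Rightarrow> real" where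
  "L2norm w f = sqrt (\<integral>v. w v * (f v)\<^sup>2 \<partial>lborel)"

definition locally_integrable2 :: "('v::euclidean_space \<Rightarrow> 'v \<Rightarrow> real) \<Rightarrow> bool" where
  "locally_integrable2 g \<longleftrightarrow>
     (\<forall>K. compact K \<longrightarrow> set_integrable (lborel :: ('v \<times> 'v) measure) K (\<lambda>(v, v'). g v v'))"

definition bfun :: "('x \<Rightarrow> 'v::euclidean_space \<Rightarrow> 'v \<Rightarrow> real) \<Rightarrow> ('v \<Rightarrow> real) \<Rightarrow> 'x \<Rightarrow> 'v \<Rightarrow> 'v \<Rightarrow> real" where
  "bfun \<sigma> F x v v' = \<sigma> x v v' / F v"

text \<open>Assumption (B3) with constant M. The first integral is taken in [0,\<infinity>] with
  c / 0 = \<infinity> for c > 0 (ennreal division), so that vanishing b makes it infinite.\<close>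
definition B3 :: "('x \<Rightarrow> 'v::euclidean_space \<Rightarrow> 'v \<Rightarrow> real) \<Rightarrow> ('v \<Rightarrow> real) \<Rightarrow> real \<Rightarrow> bool" where
  "B3 \<sigma> F M \<longleftrightarrow> (\<forall>x v.
     let I1 = (\<integral>\<^sup>+v'. ennreal (F v' * nu \<sigma> x v) / ennreal (bfun \<sigma> F x v v') \<partial>lborel);
         I2 = (\<integral>\<^sup>+v'. ennreal (F v' / nu \<sigma> x v' * (bfun \<sigma> F x v v')\<^sup>2 / (nu \<sigma> x v)\<^sup>2) \<partial>lborel)
     in I1 < \<infinity> \<and> I2 < \<infinity> \<and> enn2real I1 + sqrt (enn2real I2) \<le> M)"

end

(* Write f = h F.  Fubini together with nu(v) = int sigma(v',v) dv' gives int Q(f) = 0 and,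
   with the equilibrium relation int sigma(v,v') F(v') dv' = nu(v) F(v), the Dirichlet form
     int Q(f) h dv = -1/2 int int sigma(v,v') F(v') (h(v) - h(v'))^2 dv' dv.
   Cauchy-Schwarz against the second integral of (B3) bounds the gain term
   int sigma(v,v') f(v') dv', hence Q(f)/nu, in L^2 with weight nu/F.  For the spectral gap,
   int F = 1 gives h(v) - rho = int F(v') (h(v) - h(v')) dv', and Cauchy-Schwarz against the
   first integral of (B3) bounds its square by M/(nu F)(v) times the inner integral of the
   Dirichlet form; integrating in v gives the inequality with constant 1/(2M). *)

theory Submission
  imports Defs
begin

lemma locally_integrable2_borel_measurable:
  fixes g :: "'v::euclidean_space \<Rightarrow> 'v \<Rightarrow> real"
  assumes "locally_integrable2 g"
  shows "case_prod g \<in> borel_measurable (lborel \<Otimes>\<^sub>M lborel)"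
proof -
  define g\<^sub>k where "g\<^sub>k = (\<lambda>k::nat. \<lambda>z::'v \<times> 'v. indicator (cball 0 (real k)) z *\<^sub>R case_prod g z)"
  have truncated_measurable: "g\<^sub>k k \<in> borel_measurable lborel" for k
  proof -
    have "set_integrable (lborel :: ('v \<times> 'v) measure) (cball 0 (real k)) (case_prod g)"
      using assms unfolding locally_integrable2_def by simp
    then show ?thesis
      unfolding set_integrable_def g\<^sub>k_def by (rule borel_measurable_integrable)
  qed
  have truncated_limit: "(\<lambda>k. g\<^sub>k k z) \<longlonglongrightarrow> case_prod g z" for z
  proof (rule tendsto_eventually)
    have "g\<^sub>k k z = case_prod g z" if "nat \<lceil>norm z\<rceil> \<le> k" for k
      using that unfolding g\<^sub>k_def by (simp add: dist_norm)
    then show "\<forall>\<^sub>F k in sequentially. g\<^sub>k k z = case_prod g z"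
      unfolding eventually_sequentially by blast
  qed
  have "case_prod g \<in> borel_measurable (lborel :: ('v \<times> 'v) measure)"
    by (rule borel_measurable_LIMSEQ_real[OF truncated_limit truncated_measurable])
  then show ?thesis
    by (simp add: lborel_prod)
qed

lemma B3_nn_integral_bounds:
  fixes \<sigma> :: "'x \<Rightarrow> 'v::euclidean_space \<Rightarrow> 'v \<Rightarrow> real"
  assumes "B3 \<sigma> F M"
  shows "(\<integral>\<^sup>+v'. ennreal (F v' * nu \<sigma> x v) / ennreal (\<sigma> x v v' / F v) \<partial>lborel) \<le> ennreal M"
    and "(\<integral>\<^sup>+v'. ennreal (F v' / nu \<sigma> x v' * (\<sigma> x v v' / F v)\<^sup>2 / (nu \<sigma> x v)\<^sup>2) \<partial>lborel)
           \<le> ennreal (M\<^sup>2)"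
proof -
  define I\<^sub>1 where "I\<^sub>1 = (\<integral>\<^sup>+v'. ennreal (F v' * nu \<sigma> x v) / ennreal (\<sigma> x v v' / F v) \<partial>lborel)"
  define I\<^sub>2 where
    "I\<^sub>2 = (\<integral>\<^sup>+v'. ennreal (F v' / nu \<sigma> x v' * (\<sigma> x v v' / F v)\<^sup>2 / (nu \<sigma> x v)\<^sup>2) \<partial>lborel)"
  have fin: "I\<^sub>1 < \<infinity>" "I\<^sub>2 < \<infinity>" and sum_le: "enn2real I\<^sub>1 + sqrt (enn2real I\<^sub>2) \<le> M"
    using assms unfolding B3_def bfun_def Let_def I\<^sub>1_def I\<^sub>2_def by blast+
  have "enn2real I\<^sub>1 \<le> M"
    using sum_le real_sqrt_ge_zero[OF enn2real_nonneg[of I\<^sub>2]] by linarith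
  then show "I\<^sub>1 \<le> ennreal M"
    using ennreal_leI fin(1) by (metis ennreal_enn2real infinity_ennreal_def)
  have "sqrt (enn2real I\<^sub>2) \<le> M"
    using sum_le enn2real_nonneg[of I\<^sub>1] by linarith
  then have "enn2real I\<^sub>2 \<le> M\<^sup>2"
    by (rule sqrt_le_D)
  then show "I\<^sub>2 \<le> ennreal (M\<^sup>2)"
    using ennreal_leI fin(2) by (metis ennreal_enn2real infinity_ennreal_def)
qed

lemma Cauchy_Schwarz_nn_integral_weighted:
  assumes [measurable]: "a \<in> borel_measurable M" "b \<in> borel_measurable M" "w \<in> borel_measurable M"
    and "\<And>x. 0 \<le> a x" "\<And>x. 0 \<le> b x" "AE x in M. 0 < w x"
  shows "(\<integral>\<^sup>+x. ennreal (a x * b x) \<partial>M)\<^sup>2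
           \<le> (\<integral>\<^sup>+x. ennreal ((a x)\<^sup>2 / w x) \<partial>M) * (\<integral>\<^sup>+x. ennreal (w x * (b x)\<^sup>2) \<partial>M)"
proof -
  define p where "p x = ennreal (sqrt ((a x)\<^sup>2 / w x))" for x
  define q where "q x = ennreal (sqrt (w x * (b x)\<^sup>2))" for x
  have [measurable]: "p \<in> borel_measurable M" "q \<in> borel_measurable M"
    unfolding p_def q_def by measurable
  have "AE x in M. ennreal (a x * b x) = p x * q x \<and>
      p x ^ 2 = ennreal ((a x)\<^sup>2 / w x) \<and> q x ^ 2 = ennreal (w x * (b x)\<^sup>2)"
    using assms(6)
  proof eventually_elim
    case (elim x)
    have nonneg: "0 \<le> (a x)\<^sup>2 / w x" "0 \<le> w x * (b x)\<^sup>2"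
      using elim by simp_all
    have "sqrt ((a x)\<^sup>2 / w x) * sqrt (w x * (b x)\<^sup>2) = sqrt ((a x)\<^sup>2 / w x * (w x * (b x)\<^sup>2))"
      by (rule real_sqrt_mult[symmetric])
    also have "\<dots> = sqrt ((a x * b x)\<^sup>2)"
      using elim by (simp add: power_mult_distrib)
    also have "\<dots> = a x * b x"
      using assms(4,5)[of x] by simp
    finally have "ennreal (a x * b x) = p x * q x"
      unfolding p_def q_def by (metis ennreal_mult nonneg real_sqrt_ge_zero)
    with nonneg show ?case
      unfolding p_def q_def by (simp add: ennreal_power)
  qed
  then have eqs: "(\<integral>\<^sup>+x. ennreal (a x * b x) \<partial>M) = (\<integral>\<^sup>+x. p x * q x \<partial>M)"
    "(\<integral>\<^sup>+x. p x ^ 2 \<partial>M) = (\<integral>\<^sup>+x. ennreal ((a x)\<^sup>2 / w x) \<partial>M)"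
    "(\<integral>\<^sup>+x. q x ^ 2 \<partial>M) = (\<integral>\<^sup>+x. ennreal (w x * (b x)\<^sup>2) \<partial>M)"
    by (simp_all add: nn_integral_cong_AE)
  show ?thesis
    unfolding eqs(1) eqs(2,3)[symmetric] by (rule Cauchy_Schwarz_nn_integral) measurable
qed

lemma nn_integral_square_bound_imp_integrable:
  assumes [measurable]: "g \<in> borel_measurable M"
    and "\<And>x. 0 \<le> g x" "0 \<le> C" "(\<integral>\<^sup>+x. ennreal (g x) \<partial>M)\<^sup>2 \<le> ennreal C"
  shows "integrable M g" "(\<integral>x. g x \<partial>M)\<^sup>2 \<le> C"
proof -
  have "(\<integral>\<^sup>+x. ennreal (g x) \<partial>M)\<^sup>2 < \<infinity>"
    using assms(4) ennreal_less_top infinity_ennreal_def le_less_trans by metis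
  then have "(\<integral>\<^sup>+x. ennreal (g x) \<partial>M) < \<infinity>"
    by (simp add: power_less_top_ennreal)
  then show int: "integrable M g"
    using assms(2) by (intro integrableI_nonneg) auto
  have "0 \<le> (\<integral>x. g x \<partial>M)"
    using assms(2) by (simp add: integral_nonneg_AE)
  moreover have "(\<integral>\<^sup>+x. ennreal (g x) \<partial>M) = ennreal (\<integral>x. g x \<partial>M)"
    using int assms(2) by (intro nn_integral_eq_integral) auto
  ultimately have "ennreal ((\<integral>x. g x \<partial>M)\<^sup>2) \<le> ennreal C"
    using assms(4) by (simp add: ennreal_power)
  with assms(3) show "(\<integral>x. g x \<partial>M)\<^sup>2 \<le> C"
    by simp
qed

(* sigma and nu stand for sigma(x,.,.) and nu(x,.) at a fixed position x; the last two
   assumptions are (B3), in the form given by B3_nn_integral_bounds. *)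
locale linear_collision =
  fixes \<sigma> :: "'v::euclidean_space \<Rightarrow> 'v \<Rightarrow> real" and \<nu> F :: "'v \<Rightarrow> real" and M :: real
  assumes kernel_nonneg: "\<And>v v'. 0 \<le> \<sigma> v v'"
    and kernel_measurable[measurable]: "case_prod \<sigma> \<in> borel_measurable (lborel \<Otimes>\<^sub>M lborel)"
    and integrable_kernel: "\<And>v. integrable lborel (\<lambda>v'. \<sigma> v' v)"
    and nu_eq_integral: "\<And>v. \<nu> v = (\<integral>v'. \<sigma> v' v \<partial>lborel)"
    and nu_pos: "\<And>v. 0 < \<nu> v"
    and F_measurable[measurable]: "F \<in> borel_measurable lborel"
    and F_pos: "\<And>v. 0 < F v"
    and integrable_F: "integrable lborel F"
    and integral_F: "(\<integral>v. F v \<partial>lborel) = 1"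
    and integrable_nu_F: "integrable lborel (\<lambda>v. \<nu> v * F v)"
    and equilibrium: "\<And>v. (\<integral>v'. (\<sigma> v v' * F v' - \<sigma> v' v * F v) \<partial>lborel) = 0"
    and M_pos: "0 < M"
    and inverse_kernel_bound:
      "\<And>v. (\<integral>\<^sup>+v'. ennreal (F v' * \<nu> v) / ennreal (\<sigma> v v' / F v) \<partial>lborel) \<le> ennreal M"
    and kernel_square_bound:
      "\<And>v. (\<integral>\<^sup>+v'. ennreal (F v' / \<nu> v' * (\<sigma> v v' / F v)\<^sup>2 / (\<nu> v)\<^sup>2) \<partial>lborel) \<le> ennreal (M\<^sup>2)"
begin

definition Q :: "('v \<Rightarrow> real) \<Rightarrow> 'v \<Rightarrow> real" where
  "Q f v = (\<integral>v'. (\<sigma> v v' * f v' - \<sigma> v' v * f v) \<partial>lborel)"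

lemma nu_measurable[measurable]: "\<nu> \<in> borel_measurable lborel"
proof -
  have "(\<lambda>v. \<integral>v'. \<sigma> v' v \<partial>lborel) \<in> borel_measurable lborel"
    by measurable
  then show ?thesis
    by (simp add: nu_eq_integral[abs_def])
qed

lemma Q_measurable[measurable]:
  assumes [measurable]: "f \<in> borel_measurable lborel"
  shows "Q f \<in> borel_measurable lborel"
  unfolding Q_def[abs_def] by measurable

lemma nn_integral_kernel: "(\<integral>\<^sup>+v. ennreal (\<sigma> v v') \<partial>lborel) = ennreal (\<nu> v')"
  using integrable_kernel[of v'] by (simp add: nu_eq_integral nn_integral_eq_integral kernel_nonneg)

lemma nn_integral_kernel_Tonelli:
  assumes [measurable]: "g \<in> borel_measurable lborel"
  shows "(\<integral>\<^sup>+v. (\<integral>\<^sup>+v'. ennreal (\<sigma> v v') * g v' \<partial>lborel) \<partial>lborel) = (\<integral>\<^sup>+v'. ennreal (\<nu> v') * g v' \<partial>lborel)"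
proof -
  have "(\<integral>\<^sup>+v. (\<integral>\<^sup>+v'. ennreal (\<sigma> v v') * g v' \<partial>lborel) \<partial>lborel)
      = (\<integral>\<^sup>+v'. (\<integral>\<^sup>+v. ennreal (\<sigma> v v') * g v' \<partial>lborel) \<partial>lborel)"
    by (rule lborel_pair.Fubini'[symmetric]) measurable
  also have "\<dots> = (\<integral>\<^sup>+v'. ennreal (\<nu> v') * g v' \<partial>lborel)"
    by (rule nn_integral_cong) (simp add: nn_integral_multc nn_integral_kernel)
  finally show ?thesis .
qed

lemma kernel_Fubini:
  assumes "L1w \<nu> f"
  shows "integrable (lborel \<Otimes>\<^sub>M lborel) (\<lambda>(v, v'). \<sigma> v v' * f v')"
    and "AE v in lborel. integrable lborel (\<lambda>v'. \<sigma> v v' * f v')"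
    and "integrable lborel (\<lambda>v. \<integral>v'. \<sigma> v v' * f v' \<partial>lborel)"
    and "(\<integral>v. (\<integral>v'. \<sigma> v v' * f v' \<partial>lborel) \<partial>lborel) = (\<integral>v. \<nu> v * f v \<partial>lborel)"
proof -
  have [measurable]: "f \<in> borel_measurable lborel" and f_int: "integrable lborel (\<lambda>v. \<nu> v * \<bar>f v\<bar>)"
    using assms unfolding L1w_def by auto
  have "(\<integral>\<^sup>+z. ennreal (norm ((\<lambda>(v, v'). \<sigma> v v' * f v') z)) \<partial>(lborel \<Otimes>\<^sub>M lborel))
      = (\<integral>\<^sup>+v. (\<integral>\<^sup>+v'. ennreal (\<sigma> v v') * ennreal \<bar>f v'\<bar> \<partial>lborel) \<partial>lborel)"
    by (subst lborel.nn_integral_fst[symmetric], measurable)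
       (auto intro!: nn_integral_cong simp: kernel_nonneg abs_mult ennreal_mult)
  also have "\<dots> = (\<integral>\<^sup>+v'. ennreal (norm (\<nu> v' * \<bar>f v'\<bar>)) \<partial>lborel)"
    using nu_pos
    by (subst nn_integral_kernel_Tonelli) (auto intro!: nn_integral_cong simp: abs_mult ennreal_mult less_imp_le)
  also have "\<dots> < \<infinity>"
    using f_int by (simp add: integrable_iff_bounded)
  finally show prod_int: "integrable (lborel \<Otimes>\<^sub>M lborel) (\<lambda>(v, v'). \<sigma> v v' * f v')"
    by (simp add: integrable_iff_bounded)
  show "AE v in lborel. integrable lborel (\<lambda>v'. \<sigma> v v' * f v')"
    using lborel_pair.AE_integrable_fst'[OF prod_int] by simp
  show "integrable lborel (\<lambda>v. \<integral>v'. \<sigma> v v' * f v' \<partial>lborel)"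
    using lborel_pair.integrable_fst'[OF prod_int] by simp
  have "(\<integral>v. (\<integral>v'. \<sigma> v v' * f v' \<partial>lborel) \<partial>lborel) = (\<integral>v'. (\<integral>v. \<sigma> v v' * f v' \<partial>lborel) \<partial>lborel)"
    by (rule lborel_pair.Fubini_integral[symmetric]) (use prod_int in simp)
  also have "\<dots> = (\<integral>v'. \<nu> v' * f v' \<partial>lborel)"
    by (simp add: nu_eq_integral)
  finally show "(\<integral>v. (\<integral>v'. \<sigma> v v' * f v' \<partial>lborel) \<partial>lborel) = (\<integral>v. \<nu> v * f v \<partial>lborel)" .
qed

lemma gain_Cauchy_Schwarz:
  assumes [measurable]: "g \<in> borel_measurable lborel" and g_nonneg: "\<And>v. 0 \<le> g v"
  shows "(\<integral>\<^sup>+v'. ennreal (\<sigma> v v' * g v') \<partial>lborel)\<^sup>2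
     \<le> ennreal ((F v * \<nu> v * M)\<^sup>2) * (\<integral>\<^sup>+v'. ennreal (\<nu> v' / F v' * (g v')\<^sup>2) \<partial>lborel)"
proof -
  have weight: "(\<sigma> v v')\<^sup>2 / (\<nu> v' / F v') = (F v * \<nu> v)\<^sup>2 * (F v' / \<nu> v' * (\<sigma> v v' / F v)\<^sup>2 / (\<nu> v)\<^sup>2)"
    for v'
    using F_pos[of v] F_pos[of v'] nu_pos[of v] nu_pos[of v'] by (simp add: field_simps)
  have "(\<integral>\<^sup>+v'. ennreal (\<sigma> v v' * g v') \<partial>lborel)\<^sup>2
      \<le> (\<integral>\<^sup>+v'. ennreal ((\<sigma> v v')\<^sup>2 / (\<nu> v' / F v')) \<partial>lborel)
        * (\<integral>\<^sup>+v'. ennreal (\<nu> v' / F v' * (g v')\<^sup>2) \<partial>lborel)"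
    using F_pos nu_pos
    by (intro Cauchy_Schwarz_nn_integral_weighted) (auto simp: kernel_nonneg g_nonneg)
  also have "(\<integral>\<^sup>+v'. ennreal ((\<sigma> v v')\<^sup>2 / (\<nu> v' / F v')) \<partial>lborel)
      = (\<integral>\<^sup>+v'. ennreal ((F v * \<nu> v)\<^sup>2) * ennreal (F v' / \<nu> v' * (\<sigma> v v' / F v)\<^sup>2 / (\<nu> v)\<^sup>2) \<partial>lborel)"
    unfolding weight using F_pos nu_pos by (intro nn_integral_cong ennreal_mult) (auto simp: less_imp_le)
  also have "\<dots> = ennreal ((F v * \<nu> v)\<^sup>2) * (\<integral>\<^sup>+v'. ennreal (F v' / \<nu> v' * (\<sigma> v v' / F v)\<^sup>2 / (\<nu> v)\<^sup>2) \<partial>lborel)"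
    by (rule nn_integral_cmult) measurable
  also have "\<dots> \<le> ennreal ((F v * \<nu> v)\<^sup>2) * ennreal (M\<^sup>2)"
    by (intro mult_left_mono kernel_square_bound) simp
  also have "\<dots> = ennreal ((F v * \<nu> v * M)\<^sup>2)"
    by (simp add: ennreal_mult[symmetric] power_mult_distrib)
  finally show ?thesis
    by (simp add: mult_right_mono)
qed

lemma gain_L2_bound:
  assumes "L2w (\<lambda>v. \<nu> v / F v) f"
  shows "integrable lborel (\<lambda>v'. \<sigma> v v' * f v')"
    and "(\<integral>v'. \<sigma> v v' * \<bar>f v'\<bar> \<partial>lborel)\<^sup>2 \<le> (F v * \<nu> v * M)\<^sup>2 * (\<integral>v. \<nu> v / F v * (f v)\<^sup>2 \<partial>lborel)"
proof -
  have [measurable]: "f \<in> borel_measurable lborel" and f_int: "integrable lborel (\<lambda>v. \<nu> v / F v * (f v)\<^sup>2)"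
    using assms unfolding L2w_def by auto
  define N where "N = (\<integral>v. \<nu> v / F v * (f v)\<^sup>2 \<partial>lborel)"
  have "0 \<le> N"
    unfolding N_def using F_pos nu_pos by (intro integral_nonneg_AE) (auto simp: less_imp_le)
  have "(\<integral>\<^sup>+v. ennreal (\<nu> v / F v * (f v)\<^sup>2) \<partial>lborel) = ennreal N"
    unfolding N_def using f_int F_pos nu_pos by (intro nn_integral_eq_integral) (auto simp: less_imp_le)
  then have sq: "(\<integral>\<^sup>+v'. ennreal (\<sigma> v v' * \<bar>f v'\<bar>) \<partial>lborel)\<^sup>2 \<le> ennreal ((F v * \<nu> v * M)\<^sup>2 * N)"
    using gain_Cauchy_Schwarz[of "\<lambda>v. \<bar>f v\<bar>" v] \<open>0 \<le> N\<close> by (simp add: ennreal_mult)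
  have meas: "(\<lambda>v'. \<sigma> v v' * \<bar>f v'\<bar>) \<in> borel_measurable lborel"
    by measurable
  have "integrable lborel (\<lambda>v'. \<sigma> v v' * \<bar>f v'\<bar>)"
    by (rule nn_integral_square_bound_imp_integrable(1)[OF meas _ _ sq]) (simp_all add: kernel_nonneg \<open>0 \<le> N\<close>)
  moreover have "(\<integral>v'. \<sigma> v v' * \<bar>f v'\<bar> \<partial>lborel)\<^sup>2 \<le> (F v * \<nu> v * M)\<^sup>2 * N"
    by (rule nn_integral_square_bound_imp_integrable(2)[OF meas _ _ sq]) (simp_all add: kernel_nonneg \<open>0 \<le> N\<close>)
  ultimately show "integrable lborel (\<lambda>v'. \<sigma> v v' * f v')"
    and "(\<integral>v'. \<sigma> v v' * \<bar>f v'\<bar> \<partial>lborel)\<^sup>2 \<le> (F v * \<nu> v * M)\<^sup>2 * (\<integral>v. \<nu> v / F v * (f v)\<^sup>2 \<partial>lborel)"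
    unfolding N_def by (auto simp: abs_mult kernel_nonneg integrable_abs_iff[symmetric, of "\<lambda>v'. \<sigma> v v' * f v'"])
qed

lemma L2w_F: "L2w (\<lambda>v. \<nu> v / F v) F"
proof -
  have "\<nu> v / F v * (F v)\<^sup>2 = \<nu> v * F v" for v
    using F_pos[of v] by (simp add: power2_eq_square)
  then show ?thesis
    unfolding L2w_def using integrable_nu_F by simp
qed

lemma integral_gain_F: "(\<integral>v'. \<sigma> v v' * F v' \<partial>lborel) = \<nu> v * F v"
  using equilibrium[of v] gain_L2_bound(1)[OF L2w_F, of v] integrable_kernel[of v]
  by (simp add: nu_eq_integral)

lemma nn_integral_gain_F: "(\<integral>\<^sup>+v'. ennreal (\<sigma> v v' * F v') \<partial>lborel) = ennreal (\<nu> v * F v)"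
  using gain_L2_bound(1)[OF L2w_F, of v] F_pos
  by (simp add: nn_integral_eq_integral integral_gain_F kernel_nonneg less_imp_le)

lemma Q_eq_gain_minus_loss:
  assumes "integrable lborel (\<lambda>v'. \<sigma> v v' * f v')"
  shows "Q f v = (\<integral>v'. \<sigma> v v' * f v' \<partial>lborel) - \<nu> v * f v"
  using assms integrable_kernel[of v] by (simp add: Q_def nu_eq_integral)

lemma abs_Q_le:
  assumes "integrable lborel (\<lambda>v'. \<sigma> v v' * f v')"
  shows "\<bar>Q f v\<bar> \<le> (\<integral>v'. \<sigma> v v' * \<bar>f v'\<bar> \<partial>lborel) + \<nu> v * \<bar>f v\<bar>"
proof -
  have "\<bar>\<integral>v'. \<sigma> v v' * f v' \<partial>lborel\<bar> \<le> (\<integral>v'. \<sigma> v v' * \<bar>f v'\<bar> \<partial>lborel)"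
    using integral_abs_bound[of lborel "\<lambda>v'. \<sigma> v v' * f v'"] by (simp add: abs_mult kernel_nonneg)
  then show ?thesis
    unfolding Q_eq_gain_minus_loss[OF assms] using nu_pos[of v]
      abs_triangle_ineq4[of "\<integral>v'. \<sigma> v v' * f v' \<partial>lborel" "\<nu> v * f v"]
    by (simp add: abs_mult)
qed

lemma integrable_nu_mult:
  assumes "L1w \<nu> f"
  shows "integrable lborel (\<lambda>v. \<nu> v * f v)"
proof -
  have [measurable]: "f \<in> borel_measurable lborel" and "integrable lborel (\<lambda>v. \<nu> v * \<bar>f v\<bar>)"
    using assms unfolding L1w_def by auto
  then have "integrable lborel (\<lambda>v. \<bar>\<nu> v * f v\<bar>)"
    using nu_pos by (simp add: abs_mult less_imp_le)
  then show ?thesis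
    by (subst (asm) integrable_abs_iff) measurable
qed

lemma AE_Q_eq_gain_minus_loss:
  assumes "L1w \<nu> f"
  shows "AE v in lborel. Q f v = (\<integral>v'. \<sigma> v v' * f v' \<partial>lborel) - \<nu> v * f v"
  using kernel_Fubini(2)[OF assms] by eventually_elim (rule Q_eq_gain_minus_loss)

lemma integrable_Q:
  assumes "L1w \<nu> f"
  shows "integrable lborel (Q f)"
proof -
  have [measurable]: "f \<in> borel_measurable lborel"
    using assms unfolding L1w_def by simp
  have "integrable lborel (\<lambda>v. (\<integral>v'. \<sigma> v v' * f v' \<partial>lborel) - \<nu> v * f v)"
    using kernel_Fubini(3)[OF assms] integrable_nu_mult[OF assms] by simp
  then show ?thesis
    by (rule integrable_cong_AE_imp) (use AE_Q_eq_gain_minus_loss[OF assms] in \<open>auto elim: AE_mp\<close>)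
qed

lemma integral_Q_eq_0:
  assumes "L1w \<nu> f"
  shows "(\<integral>v. Q f v \<partial>lborel) = 0"
proof -
  have "(\<integral>v. Q f v \<partial>lborel) = (\<integral>v. (\<integral>v'. \<sigma> v v' * f v' \<partial>lborel) - \<nu> v * f v \<partial>lborel)"
    by (rule integral_cong_AE) (use assms in \<open>auto simp: L1w_def intro: AE_Q_eq_gain_minus_loss\<close>)
  also have "\<dots> = 0"
    using kernel_Fubini(3,4)[OF assms] integrable_nu_mult[OF assms] by simp
  finally show ?thesis .
qed

lemma Q_L1_bound:
  assumes "L1w \<nu> f"
  shows "L1w (\<lambda>_. 1) (Q f) \<and> L1norm (\<lambda>_. 1) (Q f) \<le> 2 * L1norm \<nu> f"
proof -
  have [measurable]: "f \<in> borel_measurable lborel" and f_int: "integrable lborel (\<lambda>v. \<nu> v * \<bar>f v\<bar>)"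
    using assms unfolding L1w_def by auto
  then have abs_f: "L1w \<nu> (\<lambda>v. \<bar>f v\<bar>)"
    unfolding L1w_def by simp
  have "AE v in lborel. \<bar>Q f v\<bar> \<le> (\<integral>v'. \<sigma> v v' * \<bar>f v'\<bar> \<partial>lborel) + \<nu> v * \<bar>f v\<bar>"
    using kernel_Fubini(2)[OF assms] by eventually_elim (rule abs_Q_le)
  then have "(\<integral>v. \<bar>Q f v\<bar> \<partial>lborel) \<le> (\<integral>v. (\<integral>v'. \<sigma> v v' * \<bar>f v'\<bar> \<partial>lborel) + \<nu> v * \<bar>f v\<bar> \<partial>lborel)"
    using integrable_Q[OF assms] kernel_Fubini(3)[OF abs_f] f_int by (intro integral_mono_AE) auto
  also have "\<dots> = 2 * (\<integral>v. \<nu> v * \<bar>f v\<bar> \<partial>lborel)"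
    using kernel_Fubini(3,4)[OF abs_f] f_int by simp
  finally show ?thesis
    using integrable_Q[OF assms] unfolding L1w_def L1norm_def by simp
qed

lemma Q_L2_pointwise_bound:
  assumes "L2w (\<lambda>v. \<nu> v / F v) f"
  shows "\<nu> v / F v * (Q f v / \<nu> v)\<^sup>2
    \<le> 2 * M\<^sup>2 * (\<integral>v. \<nu> v / F v * (f v)\<^sup>2 \<partial>lborel) * (\<nu> v * F v) + 2 * (\<nu> v / F v * (f v)\<^sup>2)"
proof -
  define N where "N = (\<integral>v. \<nu> v / F v * (f v)\<^sup>2 \<partial>lborel)"
  define g where "g = (\<integral>v'. \<sigma> v v' * \<bar>f v'\<bar> \<partial>lborel)"
  have "\<bar>Q f v\<bar> \<le> g + \<nu> v * \<bar>f v\<bar>"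
    unfolding g_def by (rule abs_Q_le[OF gain_L2_bound(1)[OF assms]])
  then have "(Q f v)\<^sup>2 \<le> (g + \<nu> v * \<bar>f v\<bar>)\<^sup>2"
    by (metis abs_ge_zero power2_abs power_mono)
  also have "\<dots> \<le> 2 * g\<^sup>2 + 2 * (\<nu> v * f v)\<^sup>2"
    using zero_le_power2[of "g - \<nu> v * \<bar>f v\<bar>"] by (simp add: power2_eq_square algebra_simps)
  also have "\<dots> \<le> 2 * ((F v * \<nu> v * M)\<^sup>2 * N) + 2 * (\<nu> v * f v)\<^sup>2"
    using gain_L2_bound(2)[OF assms, of v] unfolding g_def N_def by simp
  finally have "(Q f v)\<^sup>2 / (\<nu> v * F v) \<le> (2 * ((F v * \<nu> v * M)\<^sup>2 * N) + 2 * (\<nu> v * f v)\<^sup>2) / (\<nu> v * F v)"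
    using nu_pos[of v] F_pos[of v] by (intro divide_right_mono) auto
  then show ?thesis
    unfolding N_def[symmetric] using nu_pos[of v] F_pos[of v]
    by (simp add: field_simps power2_eq_square)
qed

lemma Q_L2_bound:
  assumes "L2w (\<lambda>v. \<nu> v / F v) f"
  shows "L2w (\<lambda>v. \<nu> v / F v) (\<lambda>v. Q f v / \<nu> v)
    \<and> L2norm (\<lambda>v. \<nu> v / F v) (\<lambda>v. Q f v / \<nu> v)
      \<le> sqrt (2 * M\<^sup>2 * (\<integral>v. \<nu> v * F v \<partial>lborel) + 2) * L2norm (\<lambda>v. \<nu> v / F v) f"
proof -
  have [measurable]: "f \<in> borel_measurable lborel" and f_int: "integrable lborel (\<lambda>v. \<nu> v / F v * (f v)\<^sup>2)"
    using assms unfolding L2w_def by auto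
  define N where "N = (\<integral>v. \<nu> v / F v * (f v)\<^sup>2 \<partial>lborel)"
  define bound where "bound v = 2 * M\<^sup>2 * N * (\<nu> v * F v) + 2 * (\<nu> v / F v * (f v)\<^sup>2)" for v
  have pointwise: "\<nu> v / F v * (Q f v / \<nu> v)\<^sup>2 \<le> bound v" for v
    unfolding bound_def N_def by (rule Q_L2_pointwise_bound[OF assms])
  have bound_int: "integrable lborel bound"
    unfolding bound_def[abs_def]
    by (intro Bochner_Integration.integrable_add integrable_mult_right integrable_nu_F f_int)
  have Q_int: "integrable lborel (\<lambda>v. \<nu> v / F v * (Q f v / \<nu> v)\<^sup>2)"
  proof (rule Bochner_Integration.integrable_bound[OF bound_int])
    show "AE v in lborel. norm (\<nu> v / F v * (Q f v / \<nu> v)\<^sup>2) \<le> norm (bound v)"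
      using pointwise nu_pos F_pos by (intro AE_I2) (auto intro: order_trans[OF _ abs_ge_self] simp: less_imp_le)
  qed measurable
  have "(\<integral>v. \<nu> v / F v * (Q f v / \<nu> v)\<^sup>2 \<partial>lborel) \<le> (\<integral>v. bound v \<partial>lborel)"
    by (rule integral_mono[OF Q_int bound_int pointwise])
  also have "\<dots> = (\<integral>v. 2 * M\<^sup>2 * N * (\<nu> v * F v) \<partial>lborel) + (\<integral>v. 2 * (\<nu> v / F v * (f v)\<^sup>2) \<partial>lborel)"
    unfolding bound_def
    by (intro Bochner_Integration.integral_add integrable_mult_right integrable_nu_F f_int)
  also have "\<dots> = 2 * M\<^sup>2 * N * (\<integral>v. \<nu> v * F v \<partial>lborel) + 2 * N"
    unfolding N_def by (simp only: integral_mult_right_zero)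
  also have "\<dots> = (2 * M\<^sup>2 * (\<integral>v. \<nu> v * F v \<partial>lborel) + 2) * N"
    by (simp add: algebra_simps)
  finally have "sqrt (\<integral>v. \<nu> v / F v * (Q f v / \<nu> v)\<^sup>2 \<partial>lborel)
      \<le> sqrt (2 * M\<^sup>2 * (\<integral>v. \<nu> v * F v \<partial>lborel) + 2) * sqrt N"
    by (simp flip: real_sqrt_mult)
  then show ?thesis
    using Q_int unfolding L2w_def L2norm_def N_def by simp
qed

lemma Dirichlet_loss_term:
  assumes [measurable]: "h \<in> borel_measurable lborel"
    and h_int: "integrable lborel (\<lambda>v. \<nu> v * F v * (h v)\<^sup>2)"
  shows "integrable (lborel \<Otimes>\<^sub>M lborel) (\<lambda>(v, v'). \<sigma> v v' * F v' * (h v)\<^sup>2)"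
    and "integral\<^sup>L (lborel \<Otimes>\<^sub>M lborel) (\<lambda>(v, v'). \<sigma> v v' * F v' * (h v)\<^sup>2)
      = (\<integral>v. \<nu> v * F v * (h v)\<^sup>2 \<partial>lborel)"
proof -
  have "(\<integral>\<^sup>+z. ennreal (norm ((\<lambda>(v, v'). \<sigma> v v' * F v' * (h v)\<^sup>2) z)) \<partial>(lborel \<Otimes>\<^sub>M lborel))
      = (\<integral>\<^sup>+v. (\<integral>\<^sup>+v'. ennreal (\<sigma> v v' * F v') * ennreal ((h v)\<^sup>2) \<partial>lborel) \<partial>lborel)"
    using F_pos
    by (subst lborel.nn_integral_fst[symmetric], measurable)
       (auto intro!: nn_integral_cong simp: kernel_nonneg ennreal_mult[symmetric] less_imp_le)
  also have "\<dots> = (\<integral>\<^sup>+v. ennreal (\<nu> v * F v) * ennreal ((h v)\<^sup>2) \<partial>lborel)"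
    by (simp add: nn_integral_multc nn_integral_gain_F)
  also have "\<dots> = (\<integral>\<^sup>+v. ennreal (norm (\<nu> v * F v * (h v)\<^sup>2)) \<partial>lborel)"
    using F_pos nu_pos by (auto intro!: nn_integral_cong simp: ennreal_mult[symmetric] less_imp_le)
  also have "\<dots> < \<infinity>"
    using h_int by (simp add: integrable_iff_bounded)
  finally show prod_int: "integrable (lborel \<Otimes>\<^sub>M lborel) (\<lambda>(v, v'). \<sigma> v v' * F v' * (h v)\<^sup>2)"
    by (simp add: integrable_iff_bounded)
  have "integral\<^sup>L (lborel \<Otimes>\<^sub>M lborel) (\<lambda>(v, v'). \<sigma> v v' * F v' * (h v)\<^sup>2)
      = (\<integral>v. (\<integral>v'. \<sigma> v v' * F v' \<partial>lborel) * (h v)\<^sup>2 \<partial>lborel)"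
    using lborel_pair.integral_fst'[OF prod_int] by simp
  then show "integral\<^sup>L (lborel \<Otimes>\<^sub>M lborel) (\<lambda>(v, v'). \<sigma> v v' * F v' * (h v)\<^sup>2)
      = (\<integral>v. \<nu> v * F v * (h v)\<^sup>2 \<partial>lborel)"
    by (simp add: integral_gain_F)
qed

lemma Dirichlet_gain_term:
  assumes [measurable]: "h \<in> borel_measurable lborel"
    and h_int: "integrable lborel (\<lambda>v. \<nu> v * F v * (h v)\<^sup>2)"
  shows "integrable (lborel \<Otimes>\<^sub>M lborel) (\<lambda>(v, v'). \<sigma> v v' * F v' * (h v')\<^sup>2)"
    and "integral\<^sup>L (lborel \<Otimes>\<^sub>M lborel) (\<lambda>(v, v'). \<sigma> v v' * F v' * (h v')\<^sup>2)
      = (\<integral>v. \<nu> v * F v * (h v)\<^sup>2 \<partial>lborel)"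
proof -
  have "L1w \<nu> (\<lambda>v. F v * (h v)\<^sup>2)"
    unfolding L1w_def using h_int F_pos by (simp add: abs_mult less_imp_le mult.assoc)
  note Fubini = kernel_Fubini[OF this]
  show prod_int: "integrable (lborel \<Otimes>\<^sub>M lborel) (\<lambda>(v, v'). \<sigma> v v' * F v' * (h v')\<^sup>2)"
    using Fubini(1) by (simp add: mult.assoc)
  show "integral\<^sup>L (lborel \<Otimes>\<^sub>M lborel) (\<lambda>(v, v'). \<sigma> v v' * F v' * (h v')\<^sup>2)
      = (\<integral>v. \<nu> v * F v * (h v)\<^sup>2 \<partial>lborel)"
    using lborel_pair.integral_fst'[OF prod_int] Fubini(4) by (simp add: mult.assoc)
qed

lemma integrable_Dirichlet_cross_term:
  assumes [measurable]: "h \<in> borel_measurable lborel"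
    and h_int: "integrable lborel (\<lambda>v. \<nu> v * F v * (h v)\<^sup>2)"
  shows "integrable (lborel \<Otimes>\<^sub>M lborel) (\<lambda>(v, v'). \<sigma> v v' * F v' * (h v * h v'))"
proof (rule Bochner_Integration.integrable_bound)
  show "integrable (lborel \<Otimes>\<^sub>M lborel)
      (\<lambda>z. (\<lambda>(v, v'). \<sigma> v v' * F v' * (h v)\<^sup>2) z + (\<lambda>(v, v'). \<sigma> v v' * F v' * (h v')\<^sup>2) z)"
    using Dirichlet_loss_term(1)[OF assms] Dirichlet_gain_term(1)[OF assms]
    by (rule Bochner_Integration.integrable_add)
  have "norm (\<sigma> v v' * F v' * (h v * h v')) \<le> norm (\<sigma> v v' * F v' * (h v)\<^sup>2 + \<sigma> v v' * F v' * (h v')\<^sup>2)"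
    for v v'
  proof -
    have "2 * (\<bar>h v\<bar> * \<bar>h v'\<bar>) \<le> (h v)\<^sup>2 + (h v')\<^sup>2"
      using zero_le_power2[of "\<bar>h v\<bar> - \<bar>h v'\<bar>"] by (simp add: power2_eq_square algebra_simps)
    then have "\<bar>h v * h v'\<bar> \<le> (h v)\<^sup>2 + (h v')\<^sup>2"
      using mult_nonneg_nonneg[OF abs_ge_zero[of "h v"] abs_ge_zero[of "h v'"]]
      unfolding abs_mult by linarith
    have "norm (\<sigma> v v' * F v' * (h v * h v')) = \<sigma> v v' * F v' * \<bar>h v * h v'\<bar>"
      using F_pos[of v'] kernel_nonneg[of v v'] by (simp add: abs_mult)
    also have "\<dots> \<le> \<sigma> v v' * F v' * ((h v)\<^sup>2 + (h v')\<^sup>2)"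
      using \<open>\<bar>h v * h v'\<bar> \<le> (h v)\<^sup>2 + (h v')\<^sup>2\<close> F_pos[of v'] kernel_nonneg[of v v']
      by (intro mult_left_mono) auto
    also have "\<dots> \<le> norm (\<sigma> v v' * F v' * (h v)\<^sup>2 + \<sigma> v v' * F v' * (h v')\<^sup>2)"
      by (simp add: distrib_left)
    finally show ?thesis .
  qed
  then show "AE z in lborel \<Otimes>\<^sub>M lborel. norm ((\<lambda>(v, v'). \<sigma> v v' * F v' * (h v * h v')) z)
      \<le> norm ((\<lambda>(v, v'). \<sigma> v v' * F v' * (h v)\<^sup>2) z + (\<lambda>(v, v'). \<sigma> v v' * F v' * (h v')\<^sup>2) z)"
    by (intro AE_I2) (auto split: prod.split)
qed measurable

lemma Q_mult_ratio_eq: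
  assumes "L2w (\<lambda>v. \<nu> v / F v) f"
  shows "Q f v * f v / F v
    = (\<integral>v'. \<sigma> v v' * F v' * (f v / F v * (f v' / F v')) \<partial>lborel) - \<nu> v / F v * (f v)\<^sup>2"
proof -
  have "Q f v * f v / F v = ((\<integral>v'. \<sigma> v v' * f v' \<partial>lborel) - \<nu> v * f v) * (f v / F v)"
    unfolding Q_eq_gain_minus_loss[OF gain_L2_bound(1)[OF assms]] by simp
  also have "\<dots> = (\<integral>v'. \<sigma> v v' * f v' \<partial>lborel) * (f v / F v) - \<nu> v / F v * (f v)\<^sup>2"
    by (simp add: algebra_simps power2_eq_square)
  also have "(\<integral>v'. \<sigma> v v' * f v' \<partial>lborel) * (f v / F v) = (\<integral>v'. \<sigma> v v' * f v' * (f v / F v) \<partial>lborel)"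
    by (rule integral_mult_left_zero[symmetric])
  also have "\<dots> = (\<integral>v'. \<sigma> v v' * F v' * (f v / F v * (f v' / F v')) \<partial>lborel)"
  proof (rule Bochner_Integration.integral_cong[OF refl])
    show "\<sigma> v v' * f v' * (f v / F v) = \<sigma> v v' * F v' * (f v / F v * (f v' / F v'))" for v'
      using F_pos[of v'] by simp
  qed
  finally show ?thesis .
qed

lemma Dirichlet_form:
  assumes "L2w (\<lambda>v. \<nu> v / F v) f"
  defines "h \<equiv> \<lambda>v. f v / F v"
  shows "integrable (lborel \<Otimes>\<^sub>M lborel) (\<lambda>(v, v'). \<sigma> v v' * F v' * (h v - h v')\<^sup>2)"
    and "integrable lborel (\<lambda>v. Q f v * f v / F v)"
    and "(\<integral>v. Q f v * f v / F v \<partial>lborel)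
      = - integral\<^sup>L (lborel \<Otimes>\<^sub>M lborel) (\<lambda>(v, v'). \<sigma> v v' * F v' * (h v - h v')\<^sup>2) / 2"
proof -
  have [measurable]: "f \<in> borel_measurable lborel" and f_int: "integrable lborel (\<lambda>v. \<nu> v / F v * (f v)\<^sup>2)"
    using assms(1) unfolding L2w_def by auto
  have [measurable]: "h \<in> borel_measurable lborel"
    unfolding h_def by measurable
  have energy: "\<nu> v * F v * (h v)\<^sup>2 = \<nu> v / F v * (f v)\<^sup>2" for v
    using F_pos[of v] unfolding h_def by (simp add: power2_eq_square)
  then have h_int: "integrable lborel (\<lambda>v. \<nu> v * F v * (h v)\<^sup>2)"
    using f_int by simp
  note loss = Dirichlet_loss_term[OF _ h_int]
    and gain = Dirichlet_gain_term[OF _ h_int]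
    and cross = integrable_Dirichlet_cross_term[OF _ h_int]
  have square_expansion: "(\<lambda>(v, v'). \<sigma> v v' * F v' * (h v - h v')\<^sup>2) = (\<lambda>z.
      (\<lambda>(v, v'). \<sigma> v v' * F v' * (h v)\<^sup>2) z - 2 * (\<lambda>(v, v'). \<sigma> v v' * F v' * (h v * h v')) z
      + (\<lambda>(v, v'). \<sigma> v v' * F v' * (h v')\<^sup>2) z)"
    by (auto simp: power2_eq_square algebra_simps)
  show "integrable (lborel \<Otimes>\<^sub>M lborel) (\<lambda>(v, v'). \<sigma> v v' * F v' * (h v - h v')\<^sup>2)"
    unfolding square_expansion using loss(1) gain(1) cross by simp
  have Qf_eq: "Q f v * f v / F v = (\<integral>v'. \<sigma> v v' * F v' * (h v * h v') \<partial>lborel) - \<nu> v / F v * (f v)\<^sup>2"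
    for v
    using Q_mult_ratio_eq[OF assms(1)] unfolding h_def .
  have cross_int: "integrable lborel (\<lambda>v. \<integral>v'. \<sigma> v v' * F v' * (h v * h v') \<partial>lborel)"
    using lborel_pair.integrable_fst'[OF cross] by simp
  show "integrable lborel (\<lambda>v. Q f v * f v / F v)"
    unfolding Qf_eq using cross_int f_int by simp
  have "(\<integral>v. Q f v * f v / F v \<partial>lborel)
      = integral\<^sup>L (lborel \<Otimes>\<^sub>M lborel) (\<lambda>(v, v'). \<sigma> v v' * F v' * (h v * h v'))
        - (\<integral>v. \<nu> v * F v * (h v)\<^sup>2 \<partial>lborel)"
    unfolding Qf_eq energy using cross_int f_int lborel_pair.integral_fst'[OF cross] by simp
  then show "(\<integral>v. Q f v * f v / F v \<partial>lborel)
      = - integral\<^sup>L (lborel \<Otimes>\<^sub>M lborel) (\<lambda>(v, v'). \<sigma> v v' * F v' * (h v - h v')\<^sup>2) / 2"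
    unfolding square_expansion using loss gain cross by simp
qed

lemma Q_dissipative:
  assumes "L2w (\<lambda>v. \<nu> v / F v) f"
  shows "integrable lborel (\<lambda>v. Q f v * f v / F v) \<and> (\<integral>v. Q f v * f v / F v \<partial>lborel) \<le> 0"
proof -
  have "0 \<le> integral\<^sup>L (lborel \<Otimes>\<^sub>M lborel) (\<lambda>(v, v'). \<sigma> v v' * F v' * (f v / F v - f v' / F v')\<^sup>2)"
    using F_pos by (intro integral_nonneg_AE) (auto simp: kernel_nonneg less_imp_le)
  then show ?thesis
    using Dirichlet_form[OF assms] by simp
qed

(* Where sigma(v,v') = 0 the integrand of the first (B3) integral is infinite. *)
lemma AE_kernel_pos: "AE v' in lborel. 0 < \<sigma> v v'"
proof -
  have "AE v' in lborel. ennreal (F v' * \<nu> v) / ennreal (\<sigma> v v' / F v) \<noteq> \<infinity>"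
    using inverse_kernel_bound[of v] by (intro nn_integral_PInf_AE) (measurable, auto simp: top_unique)
  then show ?thesis
  proof eventually_elim
    case (elim v')
    with F_pos[of v'] nu_pos[of v] have "\<sigma> v v' \<noteq> 0"
      by (auto simp: divide_ennreal_def)
    then show ?case
      using kernel_nonneg[of v v'] by simp
  qed
qed

lemma F_weighted_deviation_Cauchy_Schwarz:
  assumes [measurable]: "h \<in> borel_measurable lborel"
  shows "(\<integral>\<^sup>+v'. ennreal (F v' * \<bar>h v' - h v\<bar>) \<partial>lborel)\<^sup>2
    \<le> ennreal M * (\<integral>\<^sup>+v'. ennreal (\<sigma> v v' * F v' * (h v - h v')\<^sup>2 / (F v * \<nu> v)) \<partial>lborel)"
proof -
  define w where "w v' = \<sigma> v v' * F v' / (F v * \<nu> v)" for v'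
  have w_pos: "AE v' in lborel. 0 < w v'"
    using AE_kernel_pos[of v] by eventually_elim (use F_pos nu_pos in \<open>simp add: w_def\<close>)
  have "(\<integral>\<^sup>+v'. ennreal (F v' * \<bar>h v' - h v\<bar>) \<partial>lborel)\<^sup>2
      \<le> (\<integral>\<^sup>+v'. ennreal ((F v')\<^sup>2 / w v') \<partial>lborel) * (\<integral>\<^sup>+v'. ennreal (w v' * \<bar>h v' - h v\<bar>\<^sup>2) \<partial>lborel)"
    using F_pos w_pos unfolding w_def
    by (intro Cauchy_Schwarz_nn_integral_weighted) (auto simp: less_imp_le)
  also have "(\<integral>\<^sup>+v'. ennreal ((F v')\<^sup>2 / w v') \<partial>lborel)
      = (\<integral>\<^sup>+v'. ennreal (F v' * \<nu> v) / ennreal (\<sigma> v v' / F v) \<partial>lborel)"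
    using AE_kernel_pos[of v]
  proof (intro nn_integral_cong_AE, eventually_elim)
    case (elim v')
    then have "(F v')\<^sup>2 / w v' = F v' * \<nu> v / (\<sigma> v v' / F v)"
      using F_pos[of v] F_pos[of v'] nu_pos[of v] by (simp add: w_def field_simps power2_eq_square)
    then show ?case
      using elim F_pos[of v] F_pos[of v'] nu_pos[of v] by (simp add: divide_ennreal)
  qed
  also have "(\<integral>\<^sup>+v'. ennreal (w v' * \<bar>h v' - h v\<bar>\<^sup>2) \<partial>lborel)
      = (\<integral>\<^sup>+v'. ennreal (\<sigma> v v' * F v' * (h v - h v')\<^sup>2 / (F v * \<nu> v)) \<partial>lborel)"
    unfolding w_def by (intro nn_integral_cong) (simp add: power2_commute)
  also have "(\<integral>\<^sup>+v'. ennreal (F v' * \<nu> v) / ennreal (\<sigma> v v' / F v) \<partial>lborel)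
      * (\<integral>\<^sup>+v'. ennreal (\<sigma> v v' * F v' * (h v - h v')\<^sup>2 / (F v * \<nu> v)) \<partial>lborel)
    \<le> ennreal M * (\<integral>\<^sup>+v'. ennreal (\<sigma> v v' * F v' * (h v - h v')\<^sup>2 / (F v * \<nu> v)) \<partial>lborel)"
    by (intro mult_right_mono inverse_kernel_bound) simp
  finally show ?thesis .
qed

lemma F_weighted_deviation_bound:
  assumes [measurable]: "h \<in> borel_measurable lborel"
    and G_int: "integrable lborel (\<lambda>v'. \<sigma> v v' * F v' * (h v - h v')\<^sup>2)"
  shows "integrable lborel (\<lambda>v'. F v' * \<bar>h v' - h v\<bar>)"
    and "(\<integral>v'. F v' * \<bar>h v' - h v\<bar> \<partial>lborel)\<^sup>2
      \<le> M * (\<integral>v'. \<sigma> v v' * F v' * (h v - h v')\<^sup>2 \<partial>lborel) / (F v * \<nu> v)"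
proof -
  define G where "G = (\<integral>v'. \<sigma> v v' * F v' * (h v - h v')\<^sup>2 \<partial>lborel)"
  have "0 \<le> G"
    unfolding G_def using F_pos by (intro integral_nonneg_AE) (auto simp: kernel_nonneg less_imp_le)
  have "(\<integral>\<^sup>+v'. ennreal (\<sigma> v v' * F v' * (h v - h v')\<^sup>2 / (F v * \<nu> v)) \<partial>lborel) = ennreal (G / (F v * \<nu> v))"
    unfolding G_def using G_int F_pos nu_pos
    by (subst nn_integral_eq_integral) (auto simp: kernel_nonneg less_imp_le)
  then have sq: "(\<integral>\<^sup>+v'. ennreal (F v' * \<bar>h v' - h v\<bar>) \<partial>lborel)\<^sup>2 \<le> ennreal (M * G / (F v * \<nu> v))"
    using F_weighted_deviation_Cauchy_Schwarz[of h v] M_pos \<open>0 \<le> G\<close> F_pos[of v] nu_pos[of v]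
    by (simp add: ennreal_mult[symmetric])
  have meas: "(\<lambda>v'. F v' * \<bar>h v' - h v\<bar>) \<in> borel_measurable lborel"
    by measurable
  have nonneg: "0 \<le> M * G / (F v * \<nu> v)" "\<And>v'. 0 \<le> F v' * \<bar>h v' - h v\<bar>"
    using M_pos \<open>0 \<le> G\<close> F_pos nu_pos[of v] by (auto simp: less_imp_le)
  show "integrable lborel (\<lambda>v'. F v' * \<bar>h v' - h v\<bar>)"
    by (rule nn_integral_square_bound_imp_integrable(1)[OF meas nonneg(2) nonneg(1) sq])
  show "(\<integral>v'. F v' * \<bar>h v' - h v\<bar> \<partial>lborel)\<^sup>2 \<le> M * G / (F v * \<nu> v)"
    by (rule nn_integral_square_bound_imp_integrable(2)[OF meas nonneg(2) nonneg(1) sq])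
qed

(* The weight nu/F gives no direct embedding into L^1; instead the (B3)-bound is used at one
   point v0 where the Dirichlet integrand is integrable. *)
lemma integrable_L2w:
  assumes "L2w (\<lambda>v. \<nu> v / F v) f"
  shows "integrable lborel f"
proof -
  have [measurable]: "f \<in> borel_measurable lborel"
    using assms unfolding L2w_def by simp
  define h where "h v = f v / F v" for v
  have [measurable]: "h \<in> borel_measurable lborel"
    unfolding h_def by measurable
  have "AE v in lborel. integrable lborel (\<lambda>v'. \<sigma> v v' * F v' * (h v - h v')\<^sup>2)"
    using lborel_pair.AE_integrable_fst'[OF Dirichlet_form(1)[OF assms]] unfolding h_def by simp
  then obtain v\<^sub>0 where "integrable lborel (\<lambda>v'. \<sigma> v\<^sub>0 v' * F v' * (h v\<^sub>0 - h v')\<^sup>2)"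
    using eventually_happens[of _ "ae_filter lborel"] ae_filter_eq_bot_iff[of lborel] by auto
  then have "integrable lborel (\<lambda>v. F v * \<bar>h v - h v\<^sub>0\<bar> + \<bar>h v\<^sub>0\<bar> * F v)"
    using F_weighted_deviation_bound(1) integrable_F by simp
  then show ?thesis
  proof (rule Bochner_Integration.integrable_bound)
    have "\<bar>f v\<bar> \<le> F v * \<bar>h v - h v\<^sub>0\<bar> + \<bar>h v\<^sub>0\<bar> * F v" for v
    proof -
      have "\<bar>f v\<bar> = F v * \<bar>h v\<bar>"
        using F_pos[of v] unfolding h_def by (simp add: abs_mult)
      also have "\<dots> \<le> F v * (\<bar>h v - h v\<^sub>0\<bar> + \<bar>h v\<^sub>0\<bar>)"
        using F_pos[of v] by (intro mult_left_mono) auto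
      finally show ?thesis
        by (simp add: algebra_simps)
    qed
    then show "AE v in lborel. norm (f v) \<le> norm (F v * \<bar>h v - h v\<^sub>0\<bar> + \<bar>h v\<^sub>0\<bar> * F v)"
      by (intro AE_I2) (auto intro: order_trans[OF _ abs_ge_self])
  qed measurable
qed

lemma deviation_from_mass_bound:
  assumes "L2w (\<lambda>v. \<nu> v / F v) f"
    and G_int: "integrable lborel (\<lambda>v'. \<sigma> v v' * F v' * (f v / F v - f v' / F v')\<^sup>2)"
  shows "(f v - (\<integral>v. f v \<partial>lborel) * F v)\<^sup>2 * \<nu> v / F v
    \<le> M * (\<integral>v'. \<sigma> v v' * F v' * (f v / F v - f v' / F v')\<^sup>2 \<partial>lborel)"
proof -
  have [measurable]: "f \<in> borel_measurable lborel"
    using assms unfolding L2w_def by simp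
  define h where "h v = f v / F v" for v
  define \<rho> where "\<rho> = (\<integral>v. f v \<partial>lborel)"
  have [measurable]: "h \<in> borel_measurable lborel"
    unfolding h_def by measurable
  have "h v - \<rho> = (\<integral>v'. F v' * h v - f v' \<partial>lborel)"
    unfolding \<rho>_def using integral_F integrable_F integrable_L2w[OF assms(1)] by simp
  also have "\<dots> = (\<integral>v'. F v' * (h v - h v') \<partial>lborel)"
  proof (rule Bochner_Integration.integral_cong[OF refl])
    show "F v' * h v - f v' = F v' * (h v - h v')" for v'
      using F_pos[of v'] by (simp add: h_def right_diff_distrib)
  qed
  finally have "\<bar>h v - \<rho>\<bar> \<le> (\<integral>v'. F v' * \<bar>h v' - h v\<bar> \<partial>lborel)"
    using integral_abs_bound[of lborel "\<lambda>v'. F v' * (h v - h v')"] F_pos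
    by (simp add: abs_mult abs_minus_commute less_imp_le)
  then have "(h v - \<rho>)\<^sup>2 \<le> (\<integral>v'. F v' * \<bar>h v' - h v\<bar> \<partial>lborel)\<^sup>2"
    by (metis abs_ge_zero power2_abs power_mono)
  also have "\<dots> \<le> M * (\<integral>v'. \<sigma> v v' * F v' * (h v - h v')\<^sup>2 \<partial>lborel) / (F v * \<nu> v)"
    using F_weighted_deviation_bound(2)[of h v] G_int unfolding h_def by simp
  finally have "F v * \<nu> v * (h v - \<rho>)\<^sup>2 \<le> M * (\<integral>v'. \<sigma> v v' * F v' * (h v - h v')\<^sup>2 \<partial>lborel)"
    using F_pos[of v] nu_pos[of v] by (simp add: field_simps)
  moreover have "(f v - \<rho> * F v)\<^sup>2 * \<nu> v / F v = F v * \<nu> v * (h v - \<rho>)\<^sup>2"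
    unfolding h_def using F_pos[of v] by (simp add: field_simps power2_eq_square)
  ultimately show ?thesis
    unfolding h_def \<rho>_def by simp
qed

lemma spectral_gap:
  assumes "L2w (\<lambda>v. \<nu> v / F v) f"
  shows "(\<integral>v. Q f v * f v / F v \<partial>lborel)
    \<le> - (1 / (2 * M)) * (\<integral>v. (f v - (\<integral>v. f v \<partial>lborel) * F v)\<^sup>2 * \<nu> v / F v \<partial>lborel)"
proof -
  have [measurable]: "f \<in> borel_measurable lborel"
    using assms unfolding L2w_def by simp
  define G where "G v v' = \<sigma> v v' * F v' * (f v / F v - f v' / F v')\<^sup>2" for v v'
  define X where "X v = (f v - (\<integral>v. f v \<partial>lborel) * F v)\<^sup>2 * \<nu> v / F v" for v
  note Dirichlet = Dirichlet_form[OF assms, folded G_def]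
  have inner_int: "integrable lborel (\<lambda>v. M * (\<integral>v'. G v v' \<partial>lborel))"
    using lborel_pair.integrable_fst'[OF Dirichlet(1)] by simp
  have X_le: "AE v in lborel. X v \<le> M * (\<integral>v'. G v v' \<partial>lborel)"
    using lborel_pair.AE_integrable_fst'[OF Dirichlet(1)]
    by eventually_elim (simp add: X_def G_def deviation_from_mass_bound[OF assms])
  have X_nonneg: "0 \<le> X v" for v
    unfolding X_def using F_pos[of v] nu_pos[of v] by simp
  have [measurable]: "X \<in> borel_measurable lborel"
    unfolding X_def by measurable
  have X_int: "integrable lborel X"
  proof (rule Bochner_Integration.integrable_bound[OF inner_int])
    show "AE v in lborel. norm (X v) \<le> norm (M * (\<integral>v'. G v v' \<partial>lborel))"
      using X_le by eventually_elim (use X_nonneg in \<open>auto intro: order_trans[OF _ abs_ge_self]\<close>)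
  qed measurable
  have "(\<integral>v. X v \<partial>lborel) \<le> M * integral\<^sup>L (lborel \<Otimes>\<^sub>M lborel) (case_prod G)"
    using integral_mono_AE[OF X_int inner_int X_le] lborel_pair.integral_fst'[OF Dirichlet(1)] by simp
  also have "\<dots> = - 2 * M * (\<integral>v. Q f v * f v / F v \<partial>lborel)"
    using Dirichlet(3) by simp
  finally show ?thesis
    unfolding X_def using M_pos by (simp add: field_simps)
qed

end

theorem proposition2p1:
  fixes \<sigma> :: "'x \<Rightarrow> 'v::euclidean_space \<Rightarrow> 'v \<Rightarrow> real"
    and F :: "'v \<Rightarrow> real" and M :: real and x :: 'x
  assumes A1_nonneg: "\<And>x v v'. \<sigma> x v v' \<ge> 0"
    and A1_locint: "\<And>x. locally_integrable2 (\<sigma> x)"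
    and A1_nu: "\<And>x v. integrable lborel (\<lambda>v'. \<sigma> x v' v) \<and> nu \<sigma> x v > 0"
    and A2_L1: "\<And>x. L1w (nu \<sigma> x) F"
    and A2_eq: "\<And>x v. Qop \<sigma> x F v = 0"
    and A2_pos: "\<And>v. F v > 0"
    and A2_mass: "integrable lborel F" "(\<integral>v. F v \<partial>lborel) = 1"
    and B3_M: "M > 0" "B3 \<sigma> F M"
  shows
    "(\<exists>C. \<forall>f. L1w (nu \<sigma> x) f \<longrightarrow>
        L1w (\<lambda>_. 1) (Qop \<sigma> x f) \<and> L1norm (\<lambda>_. 1) (Qop \<sigma> x f) \<le> C * L1norm (nu \<sigma> x) f)
     \<and> (\<forall>f. L1w (nu \<sigma> x) f \<longrightarrow> (\<integral>v. Qop \<sigma> x f v \<partial>lborel) = 0)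
     \<and> (\<exists>C. \<forall>f. L2w (\<lambda>v. nu \<sigma> x v / F v) f \<longrightarrow>
        L2w (\<lambda>v. nu \<sigma> x v / F v) (\<lambda>v. Qop \<sigma> x f v / nu \<sigma> x v) \<and>
        L2norm (\<lambda>v. nu \<sigma> x v / F v) (\<lambda>v. Qop \<sigma> x f v / nu \<sigma> x v)
          \<le> C * L2norm (\<lambda>v. nu \<sigma> x v / F v) f)
     \<and> (\<forall>f. L2w (\<lambda>v. nu \<sigma> x v / F v) f \<longrightarrow>
        integrable lborel (\<lambda>v. Qop \<sigma> x f v * f v / F v) \<and>
        (\<integral>v. Qop \<sigma> x f v * f v / F v \<partial>lborel) \<le> 0)
     \<and> (\<forall>f. L2w (\<lambda>v. nu \<sigma> x v / F v) f \<longrightarrow>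
        (let \<rho> = (\<integral>v. f v \<partial>lborel) in
          (\<integral>v. Qop \<sigma> x f v * f v / F v \<partial>lborel)
            \<le> - (1 / (2 * M)) * (\<integral>v. (f v - \<rho> * F v)\<^sup>2 * nu \<sigma> x v / F v \<partial>lborel)))"
proof -
  interpret linear_collision "\<sigma> x" "nu \<sigma> x" F M
  proof
    show "integrable lborel (\<lambda>v. nu \<sigma> x v * F v)"
      using A2_L1[of x] A2_pos unfolding L1w_def by (simp add: less_imp_le)
    show "\<And>v. (\<integral>v'. (\<sigma> x v v' * F v' - \<sigma> x v' v * F v) \<partial>lborel) = 0"
      using A2_eq unfolding Qop_def .
  qed (use A1_nonneg locally_integrable2_borel_measurable[OF A1_locint] A1_nu A2_L1 A2_pos A2_mass B3_M
         B3_nn_integral_bounds[OF B3_M(2)] in \<open>auto simp: nu_def L1w_def\<close>)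
  have Qop_eq: "Qop \<sigma> x = Q"
    by (simp add: fun_eq_iff Qop_def Q_def)
  show ?thesis
    unfolding Qop_eq Let_def using Q_L1_bound integral_Q_eq_0 Q_L2_bound Q_dissipative spectral_gap
    by blast
qed

end
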